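(* For generic $a$ ($a\neq1$) and $k$, each of the following three pairs is a WP-Bailey pair relative to $a$ with parameter $k$ (all formulas valid for $n\ge0$): (i) $\boldsymbol{\alpha}_n=\dfrac{(-1)^nq^{n(n-1)/2}(1-aq^{2n})(a;q)_n}{(1-a)(q;q)_n}$, $\boldsymbol{\beta}_n=\dfrac{(-1)^nk^nq^{n(n-1)/2}(k;q)_n}{a^n(q;q)_n}$; (ii) $\boldsymbol{\alpha}_n=\dfrac{(-1)^na^{-n}(1-aq^{2n})(a^2;q^2)_n}{(1-a)(q^2;q^2)_n}$, $\boldsymbol{\beta}_n=\dfrac{(-1)^na^{-n}(k^2;q^2)_n}{(q^2;q^2)_n}$; (iii) $\boldsymbol{\alpha}_n=\dfrac{q^{-n/2}(1-aq^{2n})(a,\sqrt{q};q)_n}{(1-a)(q,a\sqrt{q};q)_n}$, $\boldsymbol{\beta}_n=\dfrac{(k,k\sqrt{q}/a;q)_n}{(q,a\sqrt{q};q)_n}q^{-n/2}$.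
   Context: Notation: $(x;q)_n=\prod_{i=0}^{n-1}(1-xq^i)$, $(x_1,\dots,x_j;q)_n=(x_1;q)_n\cdots(x_j;q)_n$. A pair of sequences $(\boldsymbol{\alpha}_n(a,k,q),\boldsymbol{\beta}_n(a,k,q))_{n\ge0}$ is a WP-Bailey pair (relative to $a$, with parameter $k$) if $\boldsymbol{\alpha}_0=1$ and for all $n\ge0$ \[\boldsymbol{\beta}_n=\sum_{j=0}^n\frac{(k/a;q)_{n-j}(k;q)_{n+j}}{(q;q)_{n-j}(aq;q)_{n+j}}\boldsymbol{\alpha}_j.\] *)

theory Defs
  imports Complex_Main
begin

definition qpoch :: "complex \<Rightarrow> complex \<Rightarrow> nat \<Rightarrow> complex" where
  "qpoch x q n = (\<Prod>i<n. 1 - x * q ^ i)"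

definition WP_Bailey_pair ::
  "complex \<Rightarrow> complex \<Rightarrow> complex \<Rightarrow> (nat \<Rightarrow> complex) \<Rightarrow> (nat \<Rightarrow> complex) \<Rightarrow> bool" where
  "WP_Bailey_pair a k q \<alpha> \<beta> \<longleftrightarrow>
     \<alpha> 0 = 1 \<and>
     (\<forall>n. \<beta> n = (\<Sum>j\<le>n. qpoch (k / a) q (n - j) * qpoch k q (n + j)
                          / (qpoch q q (n - j) * qpoch (a * q) q (n + j)) * \<alpha> j))"

end

theory Submission
  imports Defs
begin

text \<open>
  Each pair is checked by creative telescoping. In all three cases beta (n+1) = rho n * beta n with
  rho n rational in q^n, and the summands T n j (kernel times alpha j) of the defining sum satisfy
  T (n+1) j - rho n * T n j = G n (j+1) - G n j for an explicit certificate G with G n 0 = 0 and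
  G n (n+1) = - T (n+1) (n+1). Summing over j \<le> n shows that the sums obey the same recurrence
  as beta, and both start at 1.
\<close>

lemma qpoch_0 [simp]: "qpoch x q 0 = 1"
  by (simp add: qpoch_def)

lemma qpoch_Suc: "qpoch x q (Suc n) = qpoch x q n * (1 - x * q ^ n)"
  by (simp add: qpoch_def)

definition wp_kernel :: "complex \<Rightarrow> complex \<Rightarrow> complex \<Rightarrow> nat \<Rightarrow> nat \<Rightarrow> complex" where
  "wp_kernel a k q n j = qpoch (k / a) q (n - j) * qpoch k q (n + j)
                          / (qpoch q q (n - j) * qpoch (a * q) q (n + j))"

definition wp_kernel_shift :: "complex \<Rightarrow> complex \<Rightarrow> complex \<Rightarrow> nat \<Rightarrow> nat \<Rightarrow> complex" where
  "wp_kernel_shift a k q n j = qpoch (k / a) q (Suc n - j) * qpoch k q (n + j)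
                          / (qpoch q q (Suc n - j) * qpoch (a * q) q (n + j))"

lemma wp_kernel_Suc:
  "wp_kernel a k q (Suc (j + m)) j = wp_kernel a k q (j + m) j
     * ((1 - k / a * q ^ m) * (1 - k * q ^ (2 * j + m)))
     / ((1 - q ^ Suc m) * (1 - a * q ^ Suc (2 * j + m)))"
proof -
  have idx: "Suc (j + m) - j = Suc m" "Suc (j + m) + j = Suc (2 * j + m)" "j + m - j = m"
    "j + m + j = 2 * j + m"
    by simp_all
  show ?thesis
    unfolding wp_kernel_def idx qpoch_Suc by (simp add: mult_ac)
qed

lemma wp_kernel_shift_eq_kernel:
  "wp_kernel_shift a k q (j + m) j = wp_kernel a k q (j + m) j * (1 - k / a * q ^ m) / (1 - q ^ Suc m)"
proof -
  have idx: "Suc (j + m) - j = Suc m" "j + m - j = m" by simp_all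
  show ?thesis
    unfolding wp_kernel_def wp_kernel_shift_def idx qpoch_Suc by (simp add: mult_ac)
qed

lemma wp_kernel_shift_Suc_eq_kernel:
  "wp_kernel_shift a k q (j + m) (Suc j) = wp_kernel a k q (j + m) j
     * (1 - k * q ^ (2 * j + m)) / (1 - a * q ^ Suc (2 * j + m))"
proof -
  have idx: "Suc (j + m) - Suc j = m" "j + m - j = m" "j + m + Suc j = Suc (2 * j + m)"
    "j + m + j = 2 * j + m"
    by simp_all
  show ?thesis
    unfolding wp_kernel_def wp_kernel_shift_def idx qpoch_Suc by (simp add: mult.assoc)
qed

lemma wp_kernel_Suc_Suc:
  "wp_kernel a k q (Suc n) (Suc n) = wp_kernel_shift a k q n (Suc n)
     * (1 - k * q ^ Suc (2 * n)) / (1 - a * q ^ Suc (Suc (2 * n)))"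
proof -
  have idx: "Suc n + Suc n = Suc (Suc (2 * n))" "n + Suc n = Suc (2 * n)" by simp_all
  show ?thesis
    unfolding wp_kernel_def wp_kernel_shift_def idx qpoch_Suc by (simp add: mult.assoc)
qed

lemma WP_Bailey_pairI_telescoping:
  fixes \<alpha> \<beta> \<rho> :: "nat \<Rightarrow> complex" and G :: "nat \<Rightarrow> nat \<Rightarrow> complex"
  assumes \<alpha>_0: "\<alpha> 0 = 1" and \<beta>_0: "\<beta> 0 = 1"
    and \<beta>_Suc: "\<And>n. \<beta> (Suc n) = \<rho> n * \<beta> n"
    and telescope: "\<And>n j. j \<le> n \<Longrightarrow>
      wp_kernel a k q (Suc n) j * \<alpha> j - \<rho> n * (wp_kernel a k q n j * \<alpha> j) = G n (Suc j) - G n j"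
    and G_0: "\<And>n. G n 0 = 0"
    and G_last: "\<And>n. G n (Suc n) = - (wp_kernel a k q (Suc n) (Suc n) * \<alpha> (Suc n))"
  shows "WP_Bailey_pair a k q \<alpha> \<beta>"
proof -
  have "\<beta> n = (\<Sum>j\<le>n. wp_kernel a k q n j * \<alpha> j)" for n
  proof (induction n)
    case 0
    then show ?case using \<alpha>_0 \<beta>_0 by (simp add: wp_kernel_def)
  next
    case (Suc n)
    have "(\<Sum>j\<le>n. wp_kernel a k q (Suc n) j * \<alpha> j) - \<rho> n * (\<Sum>j\<le>n. wp_kernel a k q n j * \<alpha> j)
        = (\<Sum>j\<le>n. wp_kernel a k q (Suc n) j * \<alpha> j - \<rho> n * (wp_kernel a k q n j * \<alpha> j))"
      by (simp add: sum_subtractf sum_distrib_left)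
    also have "\<dots> = (\<Sum>j\<le>n. G n (Suc j) - G n j)"
      by (simp add: telescope)
    also have "\<dots> = G n (Suc n)"
      using sum_lessThan_telescope[of "G n" "Suc n"] G_0 by (simp add: lessThan_Suc_atMost)
    finally show ?case
      using Suc \<beta>_Suc G_last by (simp add: algebra_simps)
  qed
  then show ?thesis
    unfolding WP_Bailey_pair_def wp_kernel_def using \<alpha>_0 by simp
qed

text \<open>
  Hypothesis identity is the telescoping relation at n = j + m,
  divided by wp_kernel a k q n j * A j.
\<close>
lemma WP_Bailey_pairI_certificate:
  fixes A u v \<rho> c \<beta> :: "nat \<Rightarrow> complex"
  assumes a_gen: "\<And>i. a * q ^ i \<noteq> 1"
    and A_0: "A 0 * (1 - a) = 1" and \<beta>_0: "\<beta> 0 = 1"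
    and \<beta>_Suc: "\<And>n. \<beta> (Suc n) = \<rho> n * \<beta> n"
    and A_Suc: "\<And>j. A (Suc j) * u (Suc j) = A j * v j"
    and u_0: "u 0 = 0"
    and c_last: "\<And>n. u (Suc n) * c n = - (1 - k * q ^ Suc (2 * n))"
    and identity: "\<And>j m.
      (1 - k / a * q ^ m) * (1 - k * q ^ (2 * j + m)) / ((1 - q ^ Suc m) * (1 - a * q ^ Suc (2 * j + m)))
        * (1 - a * q ^ (2 * j)) - \<rho> (j + m) * (1 - a * q ^ (2 * j))
      = (1 - k * q ^ (2 * j + m)) / (1 - a * q ^ Suc (2 * j + m)) * v j * c (j + m)
        - (1 - k / a * q ^ m) / (1 - q ^ Suc m) * u j * c (j + m)"
  shows "WP_Bailey_pair a k q (\<lambda>j. A j * (1 - a * q ^ (2 * j))) \<beta>"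
proof (rule WP_Bailey_pairI_telescoping[where \<rho> = \<rho>])
  let ?\<alpha> = "\<lambda>j. A j * (1 - a * q ^ (2 * j))"
  let ?G = "\<lambda>n j. wp_kernel_shift a k q n j * (A j * u j) * c n"
  show "?\<alpha> 0 = 1" "\<beta> 0 = 1" "\<beta> (Suc n) = \<rho> n * \<beta> n" for n
    using A_0 \<beta>_0 \<beta>_Suc by simp_all
  show "wp_kernel a k q (Suc n) j * ?\<alpha> j - \<rho> n * (wp_kernel a k q n j * ?\<alpha> j) = ?G n (Suc j) - ?G n j"
    if "j \<le> n" for n j
  proof -
    obtain m where n: "n = j + m" using \<open>j \<le> n\<close> le_Suc_ex by blast
    show ?thesis
      using arg_cong[OF identity[of m j], of "\<lambda>x. wp_kernel a k q (j + m) j * A j * x"]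
      unfolding n wp_kernel_Suc wp_kernel_shift_eq_kernel wp_kernel_shift_Suc_eq_kernel A_Suc divide_inverse
      by (simp add: algebra_simps)
  qed
  show "?G n 0 = 0" for n
    using u_0 by simp
  show "?G n (Suc n) = - (wp_kernel a k q (Suc n) (Suc n) * ?\<alpha> (Suc n))" for n
  proof -
    have "1 - a * q ^ (2 * Suc n) \<noteq> 0"
      using a_gen by (metis right_minus_eq)
    then have "wp_kernel a k q (Suc n) (Suc n) * ?\<alpha> (Suc n)
        = wp_kernel_shift a k q n (Suc n) * A (Suc n) * (1 - k * q ^ Suc (2 * n))"
      unfolding wp_kernel_Suc_Suc by (simp add: mult_2)
    also have "\<dots> = - (wp_kernel_shift a k q n (Suc n) * A (Suc n) * (u (Suc n) * c n))"
      unfolding c_last by (simp add: right_diff_distrib)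
    finally show ?thesis
      by (simp add: mult_ac)
  qed
qed

lemma quotient_Suc_times:
  fixes N D u v :: "nat \<Rightarrow> 'a::field"
  assumes "N (Suc j) = N j * v j" and "D (Suc j) = D j * u (Suc j)" and "u (Suc j) \<noteq> 0"
  shows "N (Suc j) / D (Suc j) * u (Suc j) = N j / D j * v j"
  using assms by simp

lemma one_minus_power_Suc_nonzero:
  fixes q :: complex
  assumes "\<And>i::nat. i \<ge> 1 \<Longrightarrow> q ^ i \<noteq> 1"
  shows "1 - q ^ Suc m \<noteq> 0"
  using assms[of "Suc m"] by simp

lemma WP_Bailey_pair_quadratic_power:
  fixes a k q :: complex
  assumes a_nz: "a \<noteq> 0" and q_gen: "\<And>i::nat. i \<ge> 1 \<Longrightarrow> q ^ i \<noteq> 1"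
    and a_gen: "\<And>i::nat. a * q ^ i \<noteq> 1"
  shows "WP_Bailey_pair a k q
       (\<lambda>n. (-1) ^ n * q ^ (n * (n - 1) div 2) * (1 - a * q ^ (2 * n)) * qpoch a q n
              / ((1 - a) * qpoch q q n))
       (\<lambda>n. (-1) ^ n * k ^ n * q ^ (n * (n - 1) div 2) * qpoch k q n / (a ^ n * qpoch q q n))"
proof -
  define N D A where "N n = (-1) ^ n * q ^ (n * (n - 1) div 2) * qpoch a q n"
    and "D n = (1 - a) * qpoch q q n" and "A n = N n / D n" for n
  define \<beta> where "\<beta> n = (-1) ^ n * k ^ n * q ^ (n * (n - 1) div 2) * qpoch k q n / (a ^ n * qpoch q q n)" for n
  define u v \<rho> c where "u j = 1 - q ^ j" and "v j = - (q ^ j) * (1 - a * q ^ j)"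
    and "\<rho> n = - k * q ^ n * (1 - k * q ^ n) / (a * (1 - q ^ Suc n))"
    and "c n = - (1 - k * q ^ Suc (2 * n)) / (1 - q ^ Suc n)" for j n
  have tri: "Suc n * (Suc n - 1) div 2 = n * (n - 1) div 2 + n" for n
    by (cases n) (simp_all add: algebra_simps)
  have "WP_Bailey_pair a k q (\<lambda>j. A j * (1 - a * q ^ (2 * j))) \<beta>"
  proof (rule WP_Bailey_pairI_certificate[where u = u and v = v and \<rho> = \<rho> and c = c, OF a_gen])
    show "A 0 * (1 - a) = 1" "\<beta> 0 = 1" "u 0 = 0"
      using a_gen[of 0] by (simp_all add: A_def N_def D_def \<beta>_def u_def)
    show "\<beta> (Suc n) = \<rho> n * \<beta> n" for n
      unfolding \<beta>_def \<rho>_def tri qpoch_Suc by (simp add: power_add mult_ac)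
    show "A (Suc j) * u (Suc j) = A j * v j" for j
      unfolding A_def
    proof (rule quotient_Suc_times)
      show "N (Suc j) = N j * v j"
        unfolding N_def v_def tri qpoch_Suc by (simp add: power_add mult_ac)
      show "D (Suc j) = D j * u (Suc j)" "u (Suc j) \<noteq> 0"
        using one_minus_power_Suc_nonzero[OF q_gen, of j] by (simp_all add: D_def u_def qpoch_Suc)
    qed
    show "u (Suc n) * c n = - (1 - k * q ^ Suc (2 * n))" for n
      using one_minus_power_Suc_nonzero[OF q_gen, of n] by (simp add: u_def c_def)
    show "(1 - k / a * q ^ m) * (1 - k * q ^ (2 * j + m)) / ((1 - q ^ Suc m) * (1 - a * q ^ Suc (2 * j + m)))
          * (1 - a * q ^ (2 * j)) - \<rho> (j + m) * (1 - a * q ^ (2 * j))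
        = (1 - k * q ^ (2 * j + m)) / (1 - a * q ^ Suc (2 * j + m)) * v j * c (j + m)
          - (1 - k / a * q ^ m) / (1 - q ^ Suc m) * u j * c (j + m)" for j m
    proof -
      define X M where "X = q ^ j" and "M = q ^ m"
      have pw: "q ^ j = X" "q ^ m = M" "q ^ (2 * j) = X * X" "q ^ (j + m) = X * M"
        "q ^ (2 * j + m) = X * X * M" "q ^ Suc m = q * M" "q ^ Suc (j + m) = q * X * M"
        "q ^ Suc (2 * j + m) = q * X * X * M" "q ^ Suc (2 * (j + m)) = q * X * X * M * M"
        by (simp_all add: X_def M_def power_add mult_2)
      have "1 - q ^ Suc m \<noteq> 0" "1 - q ^ Suc (j + m) \<noteq> 0"
        using one_minus_power_Suc_nonzero[OF q_gen] by simp_all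
      moreover have "1 - a * q ^ Suc (2 * j + m) \<noteq> 0"
        using a_gen[of "Suc (2 * j + m)"] by simp
      ultimately have "a * inverse a = 1" "(1 - q * M) * inverse (1 - q * M) = 1"
        "(1 - q * X * M) * inverse (1 - q * X * M) = 1"
        "(1 - a * (q * X * X * M)) * inverse (1 - a * (q * X * X * M)) = 1"
        using a_nz unfolding pw by simp_all
      then show ?thesis
        unfolding \<rho>_def u_def v_def c_def pw divide_inverse inverse_mult_distrib by algebra
    qed
  qed
  then show ?thesis
    by (simp add: A_def N_def D_def \<beta>_def[abs_def] mult_ac)
qed

lemma WP_Bailey_pair_base_q_squared:
  fixes a k q :: complex
  assumes a_nz: "a \<noteq> 0" and q_gen: "\<And>i::nat. i \<ge> 1 \<Longrightarrow> q ^ i \<noteq> 1"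
    and a_gen: "\<And>i::nat. a * q ^ i \<noteq> 1"
  shows "WP_Bailey_pair a k q
       (\<lambda>n. (-1) ^ n * inverse a ^ n * (1 - a * q ^ (2 * n)) * qpoch (a ^ 2) (q ^ 2) n
              / ((1 - a) * qpoch (q ^ 2) (q ^ 2) n))
       (\<lambda>n. (-1) ^ n * inverse a ^ n * qpoch (k ^ 2) (q ^ 2) n / qpoch (q ^ 2) (q ^ 2) n)"
proof -
  define N D A where "N n = (-1) ^ n * inverse a ^ n * qpoch (a ^ 2) (q ^ 2) n"
    and "D n = (1 - a) * qpoch (q ^ 2) (q ^ 2) n" and "A n = N n / D n" for n
  define \<beta> where "\<beta> n = (-1) ^ n * inverse a ^ n * qpoch (k ^ 2) (q ^ 2) n / qpoch (q ^ 2) (q ^ 2) n" for n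
  define u v \<rho> c where "u j = 1 - q ^ (2 * j)" and "v j = - inverse a * (1 - a ^ 2 * q ^ (2 * j))"
    and "\<rho> n = - (1 - k ^ 2 * q ^ (2 * n)) / (a * (1 - q ^ (2 * Suc n)))"
    and "c n = - (1 - k * q ^ Suc (2 * n)) / (1 - q ^ (2 * Suc n))" for j n
  have q2: "1 - q ^ (2 * Suc n) \<noteq> 0" for n
    using one_minus_power_Suc_nonzero[OF q_gen, of "Suc (2 * n)"] by simp
  have square_power: "(x ^ 2) ^ n = x ^ (2 * n)" for x :: complex and n :: nat
    by (simp add: power_mult)
  have "WP_Bailey_pair a k q (\<lambda>j. A j * (1 - a * q ^ (2 * j))) \<beta>"
  proof (rule WP_Bailey_pairI_certificate[where u = u and v = v and \<rho> = \<rho> and c = c, OF a_gen])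
    show "A 0 * (1 - a) = 1" "\<beta> 0 = 1" "u 0 = 0"
      using a_gen[of 0] by (simp_all add: A_def N_def D_def \<beta>_def u_def)
    show "\<beta> (Suc n) = \<rho> n * \<beta> n" for n
      unfolding \<beta>_def \<rho>_def qpoch_Suc square_power
      by (simp add: power2_eq_square divide_inverse mult_ac) (simp add: algebra_simps)
    show "A (Suc j) * u (Suc j) = A j * v j" for j
      unfolding A_def
    proof (rule quotient_Suc_times)
      show "N (Suc j) = N j * v j"
        unfolding N_def v_def qpoch_Suc square_power by (simp add: mult_ac)
      show "D (Suc j) = D j * u (Suc j)"
        unfolding D_def u_def qpoch_Suc square_power by (simp add: power2_eq_square mult_ac)
      show "u (Suc j) \<noteq> 0"
        using q2[of j] by (simp add: u_def)
    qed
    show "u (Suc n) * c n = - (1 - k * q ^ Suc (2 * n))" for n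
      using q2[of n] by (simp add: u_def c_def)
    show "(1 - k / a * q ^ m) * (1 - k * q ^ (2 * j + m)) / ((1 - q ^ Suc m) * (1 - a * q ^ Suc (2 * j + m)))
          * (1 - a * q ^ (2 * j)) - \<rho> (j + m) * (1 - a * q ^ (2 * j))
        = (1 - k * q ^ (2 * j + m)) / (1 - a * q ^ Suc (2 * j + m)) * v j * c (j + m)
          - (1 - k / a * q ^ m) / (1 - q ^ Suc m) * u j * c (j + m)" for j m
    proof -
      define X M where "X = q ^ j" and "M = q ^ m"
      have pw: "q ^ m = M" "q ^ (2 * j) = X * X" "q ^ (2 * (j + m)) = X * X * M * M"
        "q ^ (2 * j + m) = X * X * M" "q ^ Suc m = q * M" "q ^ (2 * Suc (j + m)) = q * q * X * X * M * M"
        "q ^ Suc (2 * j + m) = q * X * X * M" "q ^ Suc (2 * (j + m)) = q * X * X * M * M"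
        by (simp_all add: X_def M_def power_add mult_2)
      have "1 - q ^ Suc m \<noteq> 0" "1 - q ^ (2 * Suc (j + m)) \<noteq> 0"
        using one_minus_power_Suc_nonzero[OF q_gen, of m] q2[of "j + m"] by simp_all
      moreover have "1 - a * q ^ Suc (2 * j + m) \<noteq> 0"
        using a_gen[of "Suc (2 * j + m)"] by simp
      ultimately have "a * inverse a = 1" "(1 - q * M) * inverse (1 - q * M) = 1"
        "(1 - q * q * X * X * M * M) * inverse (1 - q * q * X * X * M * M) = 1"
        "(1 - a * (q * X * X * M)) * inverse (1 - a * (q * X * X * M)) = 1"
        using a_nz unfolding pw by simp_all
      then show ?thesis
        unfolding \<rho>_def u_def v_def c_def pw divide_inverse inverse_mult_distrib by algebra
    qed
  qed
  then show ?thesis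
    by (simp add: A_def N_def D_def \<beta>_def[abs_def] mult_ac)
qed

lemma WP_Bailey_pair_sqrt_q:
  fixes a k q r :: complex
  assumes a_nz: "a \<noteq> 0" and q_nz: "q \<noteq> 0" and r_sq: "r ^ 2 = q"
    and q_gen: "\<And>i::nat. i \<ge> 1 \<Longrightarrow> q ^ i \<noteq> 1"
    and a_gen: "\<And>i::nat. a * q ^ i \<noteq> 1"
    and ar_gen: "\<And>i::nat. a * r * q ^ i \<noteq> 1"
  shows "WP_Bailey_pair a k q
       (\<lambda>n. inverse r ^ n * (1 - a * q ^ (2 * n)) * (qpoch a q n * qpoch r q n)
              / ((1 - a) * (qpoch q q n * qpoch (a * r) q n)))
       (\<lambda>n. (qpoch k q n * qpoch (k * r / a) q n) / (qpoch q q n * qpoch (a * r) q n)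
              * inverse r ^ n)"
proof -
  define N D A where "N n = inverse r ^ n * (qpoch a q n * qpoch r q n)"
    and "D n = (1 - a) * (qpoch q q n * qpoch (a * r) q n)" and "A n = N n / D n" for n
  define \<beta> where "\<beta> n = (qpoch k q n * qpoch (k * r / a) q n) / (qpoch q q n * qpoch (a * r) q n)
              * inverse r ^ n" for n
  define u v \<rho> c where "u j = (1 - q ^ j) * (1 - a * inverse r * q ^ j)"
    and "v j = inverse r * (1 - a * q ^ j) * (1 - r * q ^ j)"
    and "\<rho> n = (1 - k * q ^ n) * (1 - k * r / a * q ^ n) / (r * (1 - q ^ Suc n) * (1 - a * r * q ^ n))"
    and "c n = - (1 - k * q ^ Suc (2 * n)) / ((1 - q ^ Suc n) * (1 - a * r * q ^ n))" for j n
  have rr: "r * r = q"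
    using r_sq by (simp add: power2_eq_square)
  then have r_nz: "r \<noteq> 0"
    using q_nz by auto
  have ar_Suc: "a * inverse r * q ^ Suc n = a * r * q ^ n" for n
    using r_nz by (simp flip: rr add: field_simps)
  have "WP_Bailey_pair a k q (\<lambda>j. A j * (1 - a * q ^ (2 * j))) \<beta>"
  proof (rule WP_Bailey_pairI_certificate[where u = u and v = v and \<rho> = \<rho> and c = c, OF a_gen])
    show "A 0 * (1 - a) = 1" "\<beta> 0 = 1" "u 0 = 0"
      using a_gen[of 0] by (simp_all add: A_def N_def D_def \<beta>_def u_def)
    show "\<beta> (Suc n) = \<rho> n * \<beta> n" for n
      unfolding \<beta>_def \<rho>_def qpoch_Suc by (simp add: divide_inverse mult_ac)
    show "A (Suc j) * u (Suc j) = A j * v j" for j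
      unfolding A_def
    proof (rule quotient_Suc_times)
      show "N (Suc j) = N j * v j"
        unfolding N_def v_def qpoch_Suc by (simp add: mult_ac)
      show "D (Suc j) = D j * u (Suc j)"
        unfolding D_def u_def qpoch_Suc ar_Suc by (simp add: mult_ac)
      show "u (Suc j) \<noteq> 0"
        using one_minus_power_Suc_nonzero[OF q_gen, of j] ar_gen[of j] unfolding u_def ar_Suc by simp
    qed
    show "u (Suc n) * c n = - (1 - k * q ^ Suc (2 * n))" for n
      using one_minus_power_Suc_nonzero[OF q_gen, of n] ar_gen[of n]
      unfolding u_def c_def ar_Suc by simp
    show "(1 - k / a * q ^ m) * (1 - k * q ^ (2 * j + m)) / ((1 - q ^ Suc m) * (1 - a * q ^ Suc (2 * j + m)))
          * (1 - a * q ^ (2 * j)) - \<rho> (j + m) * (1 - a * q ^ (2 * j))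
        = (1 - k * q ^ (2 * j + m)) / (1 - a * q ^ Suc (2 * j + m)) * v j * c (j + m)
          - (1 - k / a * q ^ m) / (1 - q ^ Suc m) * u j * c (j + m)" for j m
    proof -
      define X M where "X = q ^ j" and "M = q ^ m"
      have pw: "q ^ j = X" "q ^ m = M" "q ^ (2 * j) = X * X" "q ^ (j + m) = X * M"
        "q ^ (2 * j + m) = X * X * M" "q ^ Suc m = q * M" "q ^ Suc (j + m) = q * X * M"
        "q ^ Suc (2 * j + m) = q * X * X * M" "q ^ Suc (2 * (j + m)) = q * X * X * M * M"
        by (simp_all add: X_def M_def power_add mult_2)
      have "1 - q ^ Suc m \<noteq> 0" "1 - q ^ Suc (j + m) \<noteq> 0"
        using one_minus_power_Suc_nonzero[OF q_gen] by simp_all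
      moreover have "1 - a * q ^ Suc (2 * j + m) \<noteq> 0" "1 - a * r * q ^ (j + m) \<noteq> 0"
        using a_gen[of "Suc (2 * j + m)"] ar_gen[of "j + m"] by simp_all
      ultimately have "a * inverse a = 1" "r * inverse r = 1" "(1 - q * M) * inverse (1 - q * M) = 1"
        "(1 - q * X * M) * inverse (1 - q * X * M) = 1"
        "(1 - a * (q * X * X * M)) * inverse (1 - a * (q * X * X * M)) = 1"
        "(1 - a * r * (X * M)) * inverse (1 - a * r * (X * M)) = 1"
        using a_nz r_nz unfolding pw by simp_all
      then show ?thesis
        unfolding \<rho>_def u_def v_def c_def pw divide_inverse inverse_mult_distrib using rr by algebra
    qed
  qed
  then show ?thesis
    by (simp add: A_def N_def D_def \<beta>_def[abs_def] mult_ac)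
qed

theorem mainTheorem15:
  fixes a k q r :: complex
  assumes q_nz: "q \<noteq> 0"
    and a_nz: "a \<noteq> 0"
    and r_sq: "r ^ 2 = q"
    and q_gen: "\<And>i::nat. i \<ge> 1 \<Longrightarrow> q ^ i \<noteq> 1"
    and a_gen: "\<And>i::nat. a * q ^ i \<noteq> 1"
    and ar_gen: "\<And>i::nat. a * r * q ^ i \<noteq> 1"
  shows
    "WP_Bailey_pair a k q
       (\<lambda>n. (-1) ^ n * q ^ (n * (n - 1) div 2) * (1 - a * q ^ (2 * n)) * qpoch a q n
              / ((1 - a) * qpoch q q n))
       (\<lambda>n. (-1) ^ n * k ^ n * q ^ (n * (n - 1) div 2) * qpoch k q n / (a ^ n * qpoch q q n))
     \<and> WP_Bailey_pair a k q
       (\<lambda>n. (-1) ^ n * inverse a ^ n * (1 - a * q ^ (2 * n)) * qpoch (a ^ 2) (q ^ 2) n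
              / ((1 - a) * qpoch (q ^ 2) (q ^ 2) n))
       (\<lambda>n. (-1) ^ n * inverse a ^ n * qpoch (k ^ 2) (q ^ 2) n / qpoch (q ^ 2) (q ^ 2) n)
     \<and> WP_Bailey_pair a k q
       (\<lambda>n. inverse r ^ n * (1 - a * q ^ (2 * n)) * (qpoch a q n * qpoch r q n)
              / ((1 - a) * (qpoch q q n * qpoch (a * r) q n)))
       (\<lambda>n. (qpoch k q n * qpoch (k * r / a) q n) / (qpoch q q n * qpoch (a * r) q n)
              * inverse r ^ n)"
  using WP_Bailey_pair_quadratic_power[OF a_nz q_gen a_gen]
    WP_Bailey_pair_base_q_squared[OF a_nz q_gen a_gen]
    WP_Bailey_pair_sqrt_q[OF a_nz q_nz r_sq q_gen a_gen ar_gen]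
  by blast

end
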